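(* Let $G$ be a finite group and let $U_1,U_2\le G$ be almost conjugate. Suppose there exists a normal subgroup $N\trianglelefteq G$ containing both $U_1$ and $U_2$ as subgroups of index two. Then $U_1$ is conjugate to $U_2$ in $G$.
   Context: Two subgroups $U_1,U_2$ of a finite group $G$ are almost conjugate if for every conjugacy class $C$ of $G$ one has $|U_1\cap C|=|U_2\cap C|$. *)

theory Defs
  imports "HOL-Algebra.Algebra"
begin

definition conj_class :: "('a, 'b) monoid_scheme \<Rightarrow> 'a \<Rightarrow> 'a set" where
  "conj_class G x = {g \<otimes>\<^bsub>G\<^esub> x \<otimes>\<^bsub>G\<^esub> inv\<^bsub>G\<^esub> g | g. g \<in> carrier G}"

definition conj_classes :: "('a, 'b) monoid_scheme \<Rightarrow> 'a set set" where
  "conj_classes G = conj_class G ` carrier G"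

definition almost_conjugate :: "('a, 'b) monoid_scheme \<Rightarrow> 'a set \<Rightarrow> 'a set \<Rightarrow> bool" where
  "almost_conjugate G U1 U2 \<longleftrightarrow> (\<forall>C \<in> conj_classes G. card (U1 \<inter> C) = card (U2 \<inter> C))"

definition conjugate_subgroups :: "('a, 'b) monoid_scheme \<Rightarrow> 'a set \<Rightarrow> 'a set \<Rightarrow> bool" where
  "conjugate_subgroups G U1 U2 \<longleftrightarrow>
     (\<exists>g \<in> carrier G. U2 = (\<lambda>u. g \<otimes>\<^bsub>G\<^esub> u \<otimes>\<^bsub>G\<^esub> inv\<^bsub>G\<^esub> g) ` U1)"

end

theory Submission
  imports Defs
begin

(* Counting the pairs (x, g) with x in U1 and g x g^-1 in U in two ways shows that
   the sum over g of |U1 \<inter> g^-1 U g| is determined by the numbers |U \<inter> C| for the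
   conjugacy classes C, so almost conjugacy makes it the same for U = U1 and U = U2.
   If U2 were not conjugate to U1, every conjugate V of U2 would be a subgroup of N of
   order |U1| other than U1; since U1 has index two in N, this forces |U1 \<inter> V| = |U1|/2.
   The conjugates of U1 meet U1 in at least that many elements, and U1 itself in all of
   them, so the sum for U1 would be strictly larger. *)

context group
begin

lemma rcosets_index_two:
  assumes "subgroup H G" and "card (rcosets H) = 2" and "b \<in> carrier G" and "b \<notin> H"
  shows "rcosets H = {H, H #> b}"
proof -
  have "H \<in> rcosets H"
    using rcosetsI[of H \<one>] assms(1) subgroup.subset by fastforce
  moreover have "H #> b \<in> rcosets H"
    using assms(1,3) subgroup.subset rcosetsI by blast
  moreover have "H #> b \<noteq> H"
    using rcos_self[OF assms(3,1)] assms(4) by blast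
  ultimately show ?thesis
    using assms(2) by (auto simp: card_2_iff)
qed

lemma card_inter_index_two:
  assumes fin: "finite (carrier G)" and H: "subgroup H G" and "card (rcosets H) = 2"
    and V: "subgroup V G" and "\<not> V \<subseteq> H"
  shows "card V = 2 * card (V \<inter> H)"
proof -
  obtain b where b: "b \<in> V" "b \<notin> H" using \<open>\<not> V \<subseteq> H\<close> by blast
  have bG: "b \<in> carrier G" using b V subgroup.subset by blast
  have "carrier G = H \<union> (H #> b)"
    using rcosets_part_G[OF H] rcosets_index_two[OF H \<open>card (rcosets H) = 2\<close> bG b(2)] by simp
  then have "V = (V \<inter> H) \<union> (V \<inter> (H #> b))"
    using V subgroup.subset by blast
  moreover have "V \<inter> (H #> b) = (V \<inter> H) #> b"
  proof (intro equalityI subsetI)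
    fix v assume "v \<in> V \<inter> (H #> b)"
    then obtain h where h: "h \<in> H" "v = h \<otimes> b" and "v \<in> V" by (auto simp: r_coset_def)
    then have "h = v \<otimes> inv b"
      using bG H subgroup.subset by (force simp: m_assoc)
    then have "h \<in> V" using \<open>v \<in> V\<close> b(1) V by (simp add: subgroup.m_closed subgroup.m_inv_closed)
    then show "v \<in> (V \<inter> H) #> b" using h by (auto simp: r_coset_def)
  qed (use b(1) V in \<open>auto simp: r_coset_def subgroup.m_closed\<close>)
  moreover have "H \<inter> (H #> b) = {}"
    using rcos_disjoint[OF H] rcosets_index_two[OF H \<open>card (rcosets H) = 2\<close> bG b(2)]
      rcos_self[OF bG H] b(2)
    by (auto simp: pairwise_def disjnt_def)
  moreover have "card ((V \<inter> H) #> b) = card (V \<inter> H)"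
    using card_rcosets_equal[of _ "V \<inter> H"] rcosetsI[of "V \<inter> H" b] bG V subgroup.subset
    by (metis inf.coboundedI1)
  moreover have "finite V"
    using fin V subgroup.subset finite_subset by blast
  ultimately show ?thesis
    by (metis (no_types, lifting) card_Un_disjoint disjoint_iff finite_Un Int_iff mult_2)
qed

lemma card_inter_index_two_same_card:
  assumes "finite (carrier G)" and "subgroup H G" and "card (rcosets H) = 2"
    and "subgroup V G" and "card V = card H" and "V \<noteq> H"
  shows "2 * card (H \<inter> V) = card H"
proof -
  have "finite H" using assms(1,2) subgroup.subset finite_subset by blast
  then have "\<not> V \<subseteq> H" using card_subset_eq assms(5,6) by metis
  then show ?thesis
    using card_inter_index_two[OF assms(1-4)] assms(5) by (simp add: Int_commute)
qed

lemma lcos_rcos_eq_image: "a <# U #> b = (\<lambda>u. a \<otimes> u \<otimes> b) ` U"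
  by (auto simp: l_coset_def r_coset_def)

lemma mem_conj_set_iff:
  assumes "U \<subseteq> carrier G" and "g \<in> carrier G" and "x \<in> carrier G"
  shows "x \<in> inv g <# U #> g \<longleftrightarrow> g \<otimes> x \<otimes> inv g \<in> U"
proof -
  have "x = inv g \<otimes> u \<otimes> g \<longleftrightarrow> g \<otimes> x \<otimes> inv g = u" if "u \<in> U" for u
    using assms that conjugation_is_surj[of g u] conjugation_is_surj[of "inv g" x] by auto
  then show ?thesis
    unfolding lcos_rcos_eq_image image_iff using assms(1,2) by (metis (no_types, lifting))
qed

lemma card_conj_set:
  assumes "U \<subseteq> carrier G" and "g \<in> carrier G"
  shows "card (inv g <# U #> g) = card U"
  unfolding lcos_rcos_eq_image
proof (rule card_image, rule inj_onI)
  fix u v assume "u \<in> U" "v \<in> U" "inv g \<otimes> u \<otimes> g = inv g \<otimes> v \<otimes> g"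
  then show "u = v"
    using assms conjugation_is_inj[of "inv g" u v] by auto
qed

lemma (in normal) conj_set_subset:
  assumes "U \<subseteq> H" and "g \<in> carrier G"
  shows "inv g <# U #> g \<subseteq> H"
  using assms inv_op_closed1 by (auto simp: lcos_rcos_eq_image)

lemma card_conj_fiber:
  assumes x: "x \<in> carrier G" and h: "h \<in> carrier G"
  shows "card {g \<in> carrier G. g \<otimes> x \<otimes> inv g = h \<otimes> x \<otimes> inv h}
       = card {g \<in> carrier G. g \<otimes> x \<otimes> inv g = x}"
proof -
  have shift: "h \<otimes> c \<otimes> x \<otimes> inv (h \<otimes> c) = h \<otimes> x \<otimes> inv h \<longleftrightarrow> c \<otimes> x \<otimes> inv c = x"
    if c: "c \<in> carrier G" for c
  proof -
    have "h \<otimes> c \<otimes> x \<otimes> inv (h \<otimes> c) = h \<otimes> (c \<otimes> x \<otimes> inv c) \<otimes> inv h"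
      using c h x by (simp add: inv_mult_group m_assoc)
    then show ?thesis
      using c h x conjugation_is_inj[of h "c \<otimes> x \<otimes> inv c" x] by auto
  qed
  have "{g \<in> carrier G. g \<otimes> x \<otimes> inv g = h \<otimes> x \<otimes> inv h}
      = (\<lambda>c. h \<otimes> c) ` {g \<in> carrier G. g \<otimes> x \<otimes> inv g = x}"
  proof (intro equalityI subsetI)
    fix g assume g: "g \<in> {g \<in> carrier G. g \<otimes> x \<otimes> inv g = h \<otimes> x \<otimes> inv h}"
    then have "g = h \<otimes> (inv h \<otimes> g)" and "inv h \<otimes> g \<in> carrier G"
      using h by (auto simp: m_assoc[symmetric])
    with g shift[of "inv h \<otimes> g"] show "g \<in> (\<lambda>c. h \<otimes> c) ` {g \<in> carrier G. g \<otimes> x \<otimes> inv g = x}"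
      by (metis (mono_tags, lifting) image_eqI mem_Collect_eq)
  qed (use h shift in auto)
  then show ?thesis
    by (simp add: card_image inj_on_def h)
qed

lemma card_conj_into_eq_mult:
  assumes fin: "finite (carrier G)" and x: "x \<in> carrier G" and U: "U \<subseteq> carrier G"
  shows "card {g \<in> carrier G. g \<otimes> x \<otimes> inv g \<in> U}
       = card (U \<inter> conj_class G x) * card {g \<in> carrier G. g \<otimes> x \<otimes> inv g = x}"
proof -
  let ?fiber = "\<lambda>y. {g \<in> carrier G. g \<otimes> x \<otimes> inv g = y}"
  have "{g \<in> carrier G. g \<otimes> x \<otimes> inv g \<in> U} = (\<Union>y \<in> U \<inter> conj_class G x. ?fiber y)"
    by (auto simp: conj_class_def)
  then have "card {g \<in> carrier G. g \<otimes> x \<otimes> inv g \<in> U} = (\<Sum>y \<in> U \<inter> conj_class G x. card (?fiber y))"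
    using fin finite_subset[OF U fin] by (auto intro!: card_UN_disjoint)
  also have "\<dots> = (\<Sum>y \<in> U \<inter> conj_class G x. card (?fiber x))"
    using card_conj_fiber[OF x] by (intro sum.cong) (auto simp: conj_class_def)
  finally show ?thesis by simp
qed

lemma sum_card_conj_into_eq:
  assumes "finite (carrier G)" and "A \<subseteq> carrier G" and "U \<subseteq> carrier G"
  shows "(\<Sum>x\<in>A. card {g \<in> carrier G. g \<otimes> x \<otimes> inv g \<in> U})
       = (\<Sum>g\<in>carrier G. card (A \<inter> (inv g <# U #> g)))"
proof (rule sum_multicount_gen)
  show "finite A" using assms(1,2) finite_subset by blast
  show "\<forall>g\<in>carrier G. card {x \<in> A. g \<otimes> x \<otimes> inv g \<in> U} = card (A \<inter> (inv g <# U #> g))"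
    using assms(2,3) mem_conj_set_iff by (auto intro!: arg_cong[where f = card])
qed fact

lemma almost_conjugate_sum_card_inter_conj:
  assumes fin: "finite (carrier G)" and "almost_conjugate G U1 U2"
    and U1: "U1 \<subseteq> carrier G" and U2: "U2 \<subseteq> carrier G" and A: "A \<subseteq> carrier G"
  shows "(\<Sum>g\<in>carrier G. card (A \<inter> (inv g <# U1 #> g)))
       = (\<Sum>g\<in>carrier G. card (A \<inter> (inv g <# U2 #> g)))"
proof -
  have "(\<Sum>x\<in>A. card {g \<in> carrier G. g \<otimes> x \<otimes> inv g \<in> U1})
      = (\<Sum>x\<in>A. card {g \<in> carrier G. g \<otimes> x \<otimes> inv g \<in> U2})"
  proof (rule sum.cong)
    fix x assume "x \<in> A"
    then have "x \<in> carrier G" using A by blast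
    then show "card {g \<in> carrier G. g \<otimes> x \<otimes> inv g \<in> U1} = card {g \<in> carrier G. g \<otimes> x \<otimes> inv g \<in> U2}"
      using assms(2) card_conj_into_eq_mult[OF fin _ U1] card_conj_into_eq_mult[OF fin _ U2]
      by (simp add: almost_conjugate_def conj_classes_def)
  qed simp
  then show ?thesis
    using sum_card_conj_into_eq[OF fin A U1] sum_card_conj_into_eq[OF fin A U2] by simp
qed

lemma lagrange_in_subgroup:
  assumes "subgroup N G" and "subgroup H G" and "H \<subseteq> N"
  shows "card (rcosets\<^bsub>G\<lparr>carrier := N\<rparr>\<^esub> H) * card H = card N"
  using group.lagrange[OF subgroup.subgroup_is_group[OF assms(1) is_group] subgroup_incl[OF assms(2,1,3)]]
  by (simp add: order_def)

lemma card_inter_index_two_in_subgroup: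
  assumes "finite (carrier G)" and N: "subgroup N G" and H: "subgroup H G" "H \<subseteq> N"
    and "card (rcosets\<^bsub>G\<lparr>carrier := N\<rparr>\<^esub> H) = 2"
    and V: "subgroup V G" "V \<subseteq> N" and "card V = card H" and "V \<noteq> H"
  shows "2 * card (H \<inter> V) = card H"
proof -
  interpret N: group "G\<lparr>carrier := N\<rparr>"
    using subgroup.subgroup_is_group[OF N is_group] .
  have "finite (carrier (G\<lparr>carrier := N\<rparr>))"
    using assms(1) N subgroup.subset finite_subset by fastforce
  then show ?thesis
    using N.card_inter_index_two_same_card subgroup_incl[OF H(1) N H(2)]
      subgroup_incl[OF V(1) N V(2)] assms(5,8,9) by blast
qed

lemma sum_card_inter_conj_less:
  assumes fin: "finite (carrier G)" and N: "N \<lhd> G"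
    and H: "subgroup H G" "H \<subseteq> N" and index: "card (rcosets\<^bsub>G\<lparr>carrier := N\<rparr>\<^esub> H) = 2"
    and U: "subgroup U G" "U \<subseteq> N" and "card U = card H"
    and "\<not> conjugate_subgroups G H U"
  shows "(\<Sum>g\<in>carrier G. card (H \<inter> (inv g <# U #> g)))
       < (\<Sum>g\<in>carrier G. card (H \<inter> (inv g <# H #> g)))"
proof (rule sum_strict_mono_ex1[OF fin])
  have NG: "subgroup N G" using N normal_imp_subgroup by blast
  have HG: "H \<subseteq> carrier G" and UG: "U \<subseteq> carrier G" using H U subgroup.subset by blast+
  have not_conj: "inv g <# U #> g \<noteq> H" if "g \<in> carrier G" for g
    using \<open>\<not> conjugate_subgroups G H U\<close> that subgroup_conjugation_is_surj0[OF that UG]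
    unfolding conjugate_subgroups_def lcos_rcos_eq_image by metis
  have half: "2 * card (H \<inter> (inv g <# V #> g)) = card H"
    if g: "g \<in> carrier G" and V: "subgroup V G" "V \<subseteq> N"
      and "card V = card H" and "inv g <# V #> g \<noteq> H" for g V
  proof (rule card_inter_index_two_in_subgroup[OF fin NG H index])
    show "subgroup (inv g <# V #> g) G" using subgroup_conjugation_is_surj1[OF g V(1)] .
    show "inv g <# V #> g \<subseteq> N" using normal.conj_set_subset[OF N V(2) g] .
    show "card (inv g <# V #> g) = card H"
      using card_conj_set[OF subgroup.subset[OF V(1)] g] \<open>card V = card H\<close> by simp
  qed fact
  show "\<forall>g\<in>carrier G. card (H \<inter> (inv g <# U #> g)) \<le> card (H \<inter> (inv g <# H #> g))"
  proof
    fix g assume g: "g \<in> carrier G"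
    show "card (H \<inter> (inv g <# U #> g)) \<le> card (H \<inter> (inv g <# H #> g))"
    proof (cases "inv g <# H #> g = H")
      case True
      then show ?thesis using half[OF g U \<open>card U = card H\<close> not_conj[OF g]] by simp
    next
      case False
      then show ?thesis
        using half[OF g U \<open>card U = card H\<close> not_conj[OF g]] half[OF g H refl] by simp
    qed
  qed
  have "card H > 0"
    using finite_subset[OF HG fin] subgroup.one_closed[OF H(1)] by (auto simp: card_gt_0_iff)
  then have "card (H \<inter> (inv \<one> <# U #> \<one>)) < card H"
    using half[OF one_closed U \<open>card U = card H\<close> not_conj[OF one_closed]] by linarith
  moreover have "inv \<one> <# H #> \<one> = H" using HG by (simp add: lcos_mult_one)
  ultimately show "\<exists>g\<in>carrier G. card (H \<inter> (inv g <# U #> g)) < card (H \<inter> (inv g <# H #> g))"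
    by (metis Int_absorb one_closed)
qed

end

theorem proposition5p7:
  fixes G :: "('a, 'b) monoid_scheme" and U1 U2 N :: "'a set"
  assumes "group G" and "finite (carrier G)"
    and "subgroup U1 G" and "subgroup U2 G"
    and "almost_conjugate G U1 U2"
    and "N \<lhd> G"
    and "U1 \<subseteq> N" and "U2 \<subseteq> N"
    and "card (rcosets\<^bsub>G\<lparr>carrier := N\<rparr>\<^esub> U1) = 2"
    and "card (rcosets\<^bsub>G\<lparr>carrier := N\<rparr>\<^esub> U2) = 2"
  shows "conjugate_subgroups G U1 U2"
proof (rule ccontr)
  assume "\<not> conjugate_subgroups G U1 U2"
  interpret group G by fact
  have U1G: "U1 \<subseteq> carrier G" and U2G: "U2 \<subseteq> carrier G"
    using assms(3,4) subgroup.subset by blast+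
  have "card U1 = card U2"
    using lagrange_in_subgroup[OF normal_imp_subgroup[OF assms(6)] assms(3,7)]
      lagrange_in_subgroup[OF normal_imp_subgroup[OF assms(6)] assms(4,8)] assms(9,10) by simp
  show False
    using sum_card_inter_conj_less[OF assms(2,6,3,7,9,4,8) \<open>card U1 = card U2\<close>[symmetric]
        \<open>\<not> conjugate_subgroups G U1 U2\<close>]
      almost_conjugate_sum_card_inter_conj[OF assms(2,5) U1G U2G U1G]
    by simp
qed

end
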